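(* Let $G$ be a finite abelian group of order $N$. Then for every integer $m$ with $1 \leq m \leq N/2$, \[\rho_\pm(G, m, 2) \geq \min\{\rho_G^-(m),\ \rho_G^-(2m) - 1\}.\]
   Context: For subsets $A, B$ of a finite abelian group $(G,+)$ of order $N$, write $A - B = \{a - b \mid a \in A, b \in B\}$, and for $1 \le r \le N$ let $\rho^-_G(r) = \min \{|A - A| \mid A \subseteq G, |A| = r\}$. For a subset $A = \{a_1, \ldots, a_m\} \subseteq G$ of $m$ distinct elements, the signed sumset $2_\pm A$ is $\{\lambda_1 a_1 + \cdots + \lambda_m a_m \mid \lambda_i \in \mathbb{Z},\ \sum_{i=1}^m |\lambda_i| = 2\}$; equivalently it consists of the elements $\pm 2a$ for $a \in A$ and $\pm a \pm b$ for distinct $a, b \in A$. For $1 \le m \le N$, $\rho_\pm(G, m, 2) = \min\{|2_\pm A| \mid A \subseteq G, |A| = m\}$. *)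

theory Defs
  imports Main
begin

definition diffset :: "'a::ab_group_add set \<Rightarrow> 'a set \<Rightarrow> 'a set" where
  "diffset A B = {a - b | a b. a \<in> A \<and> b \<in> B}"

definition rho_minus :: "'a::ab_group_add set \<Rightarrow> nat \<Rightarrow> nat" where
  "rho_minus G r = Min {card (diffset A A) | A. A \<subseteq> G \<and> card A = r}"

definition signed_sumset2 :: "'a::ab_group_add set \<Rightarrow> 'a set" where
  "signed_sumset2 A =
     {x. \<exists>a\<in>A. x = a + a \<or> x = - (a + a)} \<union>
     {x. \<exists>a\<in>A. \<exists>b\<in>A. a \<noteq> b \<and>
          (x = a + b \<or> x = a - b \<or> x = - a + b \<or> x = - a - b)}"

definition rho_pm2 :: "'a::ab_group_add set \<Rightarrow> nat \<Rightarrow> nat" where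
  "rho_pm2 G m = Min {card (signed_sumset2 A) | A. A \<subseteq> G \<and> card A = m}"

end

theory Submission
  imports Defs
begin

text \<open>Let \<open>A\<close> have \<open>m\<close> elements. If \<open>0 \<in> 2\<^sub>\<plusminus>A\<close>, then every difference \<open>a - b\<close> lies in \<open>2\<^sub>\<plusminus>A\<close>
  (it is \<open>0\<close> when \<open>a = b\<close>), so \<open>|2\<^sub>\<plusminus>A| \<ge> |A - A| \<ge> \<rho>\<^sup>-(m)\<close>. Otherwise \<open>A\<close> and \<open>-A\<close> are disjoint,
  so \<open>A \<union> -A\<close> has \<open>2m\<close> elements, and each of its nonzero differences \<open>\<plusminus>a \<plusminus> b\<close> lies in
  \<open>2\<^sub>\<plusminus>A\<close>; hence \<open>|2\<^sub>\<plusminus>A| + 1 \<ge> |(A \<union> -A) - (A \<union> -A)| \<ge> \<rho>\<^sup>-(2m)\<close>.\<close>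

lemma finite_image_Collect_subsets:
  assumes "finite G"
  shows "finite {f A | A. A \<subseteq> G \<and> P A}"
proof -
  have "{f A | A. A \<subseteq> G \<and> P A} \<subseteq> f ` Pow G" by blast
  then show ?thesis using assms finite_subset by blast
qed

lemma rho_minus_le_card_diffset:
  assumes "finite G" and "A \<subseteq> G"
  shows "rho_minus G (card A) \<le> card (diffset A A)"
  unfolding rho_minus_def
  using assms by (intro Min_le finite_image_Collect_subsets) auto

lemma rho_pm2_attained:
  assumes "finite G" and "m \<le> card G"
  obtains A where "A \<subseteq> G" "card A = m" "rho_pm2 G m = card (signed_sumset2 A)"
proof -
  let ?S = "{card (signed_sumset2 A) | A. A \<subseteq> G \<and> card A = m}"
  obtain A0 where "A0 \<subseteq> G" "card A0 = m"
    using obtain_subset_with_card_n[OF assms(2)] by blast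
  then have "?S \<noteq> {}" by blast
  then have "Min ?S \<in> ?S"
    using finite_image_Collect_subsets[OF assms(1)] by (intro Min_in) auto
  then show ?thesis
    using that unfolding rho_pm2_def by blast
qed

lemma diffset_subset_signed_sumset2:
  assumes "0 \<in> signed_sumset2 A"
  shows "diffset A A \<subseteq> signed_sumset2 A"
proof
  fix x assume "x \<in> diffset A A"
  then obtain a b where "a \<in> A" "b \<in> A" "x = a - b"
    unfolding diffset_def by blast
  then show "x \<in> signed_sumset2 A"
    using assms unfolding signed_sumset2_def by (cases "a = b") auto
qed

lemma disjoint_uminus_if_zero_notin_signed_sumset2:
  assumes "0 \<notin> signed_sumset2 A"
  shows "A \<inter> uminus ` A = {}"
proof (rule ccontr)
  assume "A \<inter> uminus ` A \<noteq> {}"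
  then obtain a b where ab: "a \<in> A" "b \<in> A" "0 = a + b" by force
  have "0 \<in> signed_sumset2 A"
  proof (cases "a = b")
    case True
    then show ?thesis using ab unfolding signed_sumset2_def by blast
  next
    case False
    then show ?thesis using ab unfolding signed_sumset2_def by blast
  qed
  with assms show False by simp
qed

lemma diffset_symmetrization_subset:
  "diffset (A \<union> uminus ` A) (A \<union> uminus ` A) \<subseteq> insert 0 (signed_sumset2 A)"
proof
  fix x assume "x \<in> diffset (A \<union> uminus ` A) (A \<union> uminus ` A)"
  then obtain c d a b where cd: "c \<in> A" "d \<in> A"
    and a: "a = c \<or> a = - c" and b: "b = d \<or> b = - d" and x: "x = a - b"
    unfolding diffset_def by blast
  show "x \<in> insert 0 (signed_sumset2 A)"
  proof (cases "c = d")
    case True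
    then have "x = 0 \<or> x = c + c \<or> x = - (c + c)"
      using a b x by (elim disjE) (simp_all add: algebra_simps)
    then show ?thesis using cd unfolding signed_sumset2_def by blast
  next
    case False
    have "x = c + d \<or> x = c - d \<or> x = - c + d \<or> x = - c - d"
      using a b x by (elim disjE) (simp_all add: algebra_simps)
    then show ?thesis using cd False unfolding signed_sumset2_def by blast
  qed
qed

lemma signed_sumset2_subset_diffset_symmetrization:
  "signed_sumset2 A \<subseteq> diffset (A \<union> uminus ` A) (A \<union> uminus ` A)"
proof
  let ?B = "A \<union> uminus ` A"
  have diff: "c - d \<in> diffset ?B ?B" if "c \<in> ?B" "d \<in> ?B" for c d
    using that unfolding diffset_def by blast
  fix x assume "x \<in> signed_sumset2 A"
  then obtain a b where "a \<in> A" "b \<in> A"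
    and "x = a + a \<or> x = - (a + a) \<or> x = a + b \<or> x = a - b \<or> x = - a + b \<or> x = - a - b"
    unfolding signed_sumset2_def by blast
  then show "x \<in> diffset ?B ?B"
    using diff[of a "- a"] diff[of "- a" a] diff[of a "- b"] diff[of a b] diff[of b a] diff[of "- a" b]
    by (elim disjE) simp_all
qed

lemma finite_diffset:
  assumes "finite A" and "finite B"
  shows "finite (diffset A B)"
  unfolding diffset_def using assms by (intro finite_image_set2) simp_all

lemma finite_signed_sumset2:
  assumes "finite A"
  shows "finite (signed_sumset2 A)"
  using assms by (intro finite_subset[OF signed_sumset2_subset_diffset_symmetrization] finite_diffset) simp_all

lemma card_symmetrization:
  fixes A :: "'a::ab_group_add set"
  assumes "finite A" and "A \<inter> uminus ` A = {}"
  shows "card (A \<union> uminus ` A) = 2 * card A"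
proof -
  have "card (uminus ` A) = card A"
    by (intro card_image) (simp add: inj_on_def)
  then show ?thesis
    using assms by (simp add: card_Un_disjoint)
qed

lemma card_signed_sumset2_ge:
  assumes "finite G" and "uminus ` G \<subseteq> G" and "A \<subseteq> G"
  shows "min (rho_minus G (card A)) (rho_minus G (2 * card A) - 1) \<le> card (signed_sumset2 A)"
proof (cases "0 \<in> signed_sumset2 A")
  case True
  have "rho_minus G (card A) \<le> card (diffset A A)"
    using assms by (intro rho_minus_le_card_diffset)
  also have "\<dots> \<le> card (signed_sumset2 A)"
    using True assms finite_subset
    by (intro card_mono diffset_subset_signed_sumset2 finite_signed_sumset2) auto
  finally show ?thesis by simp
next
  case False
  let ?B = "A \<union> uminus ` A"
  have finA: "finite A" using assms finite_subset by blast
  have "rho_minus G (2 * card A) \<le> card (diffset ?B ?B)"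
    using rho_minus_le_card_diffset[of G ?B] assms
      card_symmetrization[OF finA disjoint_uminus_if_zero_notin_signed_sumset2[OF False]]
    by auto
  also have "\<dots> \<le> card (insert 0 (signed_sumset2 A))"
    using finA by (intro card_mono diffset_symmetrization_subset finite_insert[THEN iffD2]
        finite_signed_sumset2)
  also have "\<dots> = card (signed_sumset2 A) + 1"
    using False finA by (simp add: finite_signed_sumset2)
  finally show ?thesis by simp
qed

theorem mainTheorem9:
  fixes m :: nat
  assumes "1 \<le> m" and "2 * m \<le> card (UNIV :: 'a::{ab_group_add, finite} set)"
  shows "rho_pm2 (UNIV :: 'a set) m \<ge>
           min (rho_minus (UNIV :: 'a set) m) (rho_minus (UNIV :: 'a set) (2 * m) - 1)"
proof -
  \<comment> \<open>The bound holds for \<open>m = 0\<close> too; \<open>2 m \<le> N\<close> is only needed for \<open>m \<le> N\<close>.\<close>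
  have "m \<le> card (UNIV :: 'a set)"
    using assms(2) by simp
  then obtain A :: "'a set" where "A \<subseteq> UNIV" and A: "card A = m"
    and rho: "rho_pm2 (UNIV :: 'a set) m = card (signed_sumset2 A)"
    by (rule rho_pm2_attained[OF finite_UNIV])
  have "min (rho_minus (UNIV :: 'a set) (card A)) (rho_minus (UNIV :: 'a set) (2 * card A) - 1)
      \<le> card (signed_sumset2 A)"
    by (rule card_signed_sumset2_ge) simp_all
  then show ?thesis
    unfolding rho A .
qed

end
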